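(* Let $\Omega=\{0,1\}^{\mathbb{N}}$ with canonical process $X=(X_t)_{t\in\mathbb{N}}$, natural filtration $\mathcal{F}_t=\sigma(X_s,s\le t)$ ($\mathcal{F}_0$ trivial), $\mathcal{F}=\sigma(\bigcup_t\mathcal{F}_t)$. Define probability measures $\mathbb{P}_1,\mathbb{P}_2$ on $\mathcal{F}$ by: $\mathbb{P}_i(X_1=1)=1/2$ for $i=1,2$; conditionally on $X_1$, the variables $X_2,X_3,\dots$ are independent under both measures with, for $t\ge2$, $\mathbb{P}_1(X_t=1\mid X_1=1)=\mathbb{P}_2(X_t=1\mid X_1=0)=1/2$ and $\mathbb{P}_1(X_t=1\mid X_1=0)=\mathbb{P}_2(X_t=1\mid X_1=1)=2^{-t}$. Let $\mathcal{P}=\{\mathbb{P}_1,\mathbb{P}_2\}$ and $A=\{X_t=1\text{ for infinitely many }t\in\mathbb{N}\}$. Then $\mu^*(A)=1/2$, and there is no $\mathcal{P}$-e-process $(E_t)_{t\in\mathbb{N}_0}$ satisfying $\sup_{t\in\mathbb{N}_0}E_t\ge 1/\mu^*(A)=2$ at every point of $A$. More precisely, if $(E_t)$ is a $\mathcal{P}$-e-process and $c\in[1,\infty)$ is such that $\sup_tE_t\ge c$ on $A$, then $c<2$.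
   Context: Stopping times are with respect to the filtration above (values in $\mathbb{N}_0\cup\{\infty\}$), $\mathcal{T}$ is the set of all stopping times. Inverse-capital measure: $\mu^*(B) = \inf_{\tau\in\mathcal{T}:\, B\subseteq\{\tau<\infty\}} \sup_{\mathbb{P}\in\mathcal{P}} \mathbb{P}(\tau<\infty)$ for $B\subseteq\Omega$. A $\mathcal{P}$-e-process is a nonnegative (possibly $[0,\infty]$-valued) process $(E_t)_{t\in\mathbb{N}_0}$ adapted to $(\mathcal{F}_t)$ such that $\mathbb{E}_{\mathbb{P}}[E_\tau]\le 1$ for every $\mathbb{P}\in\mathcal{P}$ and every $\tau\in\mathcal{T}$, with the convention $E_\infty=\limsup_{t\to\infty}E_t$. *)

theory Defs
  imports "HOL-Probability.Probability"
begin

text \<open>Sample space Omega = {0,1}^N with N = {1,2,...}; a path is an (extensional)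
  function on {1..}, with X_t(w) = w t (True encodes 1).\<close>

definition Omega :: "(nat \<Rightarrow> bool) set" where
  "Omega = PiE {1..} (\<lambda>_. UNIV)"

text \<open>Natural filtration F_t = sigma(X_s, 1 <= s <= t), indexed by enat so that
  stopping times take values in N_0 \<union> {\<infinity>}; F_\<infinity> = sigma(all X_s) = F.\<close>

definition Fil :: "enat \<Rightarrow> (nat \<Rightarrow> bool) measure" where
  "Fil t = sigma Omega
     (\<Union>s\<in>{s. 1 \<le> s \<and> enat s \<le> t}. {{w \<in> Omega. w s \<in> B} | B. B \<subseteq> (UNIV :: bool set)})"

definition Qprod :: "(nat \<Rightarrow> real) \<Rightarrow> (nat \<Rightarrow> bool) measure" where
  "Qprod f = (\<Pi>\<^sub>M t\<in>{1..}. measure_pmf (bernoulli_pmf (f t)))"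

definition P1 :: "(nat \<Rightarrow> bool) measure" where
  "P1 = bind (measure_pmf (bernoulli_pmf (1/2)))
     (\<lambda>x. if x then Qprod (\<lambda>t. if t = 1 then 1 else 1/2)
                else Qprod (\<lambda>t. if t = 1 then 0 else 2 powr (- real t)))"

definition P2 :: "(nat \<Rightarrow> bool) measure" where
  "P2 = bind (measure_pmf (bernoulli_pmf (1/2)))
     (\<lambda>x. if x then Qprod (\<lambda>t. if t = 1 then 1 else 2 powr (- real t))
                else Qprod (\<lambda>t. if t = 1 then 0 else 1/2))"

definition Pfam :: "(nat \<Rightarrow> bool) measure set" where
  "Pfam = {P1, P2}"

definition mu_star :: "(nat \<Rightarrow> bool) set \<Rightarrow> real" where
  "mu_star B = (INF \<tau> \<in> {\<tau> :: (nat \<Rightarrow> bool) \<Rightarrow> enat.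
                      stopping_time Fil \<tau> \<and> B \<subseteq> {w \<in> Omega. \<tau> w < \<infinity>}}.
                  (SUP P \<in> Pfam. measure P {w \<in> Omega. \<tau> w < \<infinity>}))"

definition stopped :: "(nat \<Rightarrow> (nat \<Rightarrow> bool) \<Rightarrow> ennreal) \<Rightarrow> ((nat \<Rightarrow> bool) \<Rightarrow> enat)
                        \<Rightarrow> (nat \<Rightarrow> bool) \<Rightarrow> ennreal" where
  "stopped E \<tau> w = (case \<tau> w of enat n \<Rightarrow> E n w | \<infinity> \<Rightarrow> limsup (\<lambda>t. E t w))"

definition e_process :: "(nat \<Rightarrow> (nat \<Rightarrow> bool) \<Rightarrow> ennreal) \<Rightarrow> bool" where
  "e_process E \<longleftrightarrow>
     (\<forall>t. E t \<in> borel_measurable (Fil (enat t))) \<and>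
     (\<forall>P \<in> Pfam. \<forall>\<tau>. stopping_time Fil \<tau> \<longrightarrow> (\<integral>\<^sup>+ w. stopped E \<tau> w \<partial>P) \<le> 1)"

definition A_inf :: "(nat \<Rightarrow> bool) set" where
  "A_inf = {w \<in> Omega. infinite {t. 1 \<le> t \<and> w t}}"

end

theory Submission
  imports Defs
begin

text \<open>
  Under \<open>P1\<close> the event \<open>X\<^sub>1 = 1\<close> has probability 1/2 and is followed by fair coins, so
  \<open>A\<close> holds almost surely on it; hence every stopping time that is finite on \<open>A\<close> is finite with
  \<open>P1\<close>-probability at least 1/2. Conversely, the first success after time \<open>N\<close> is finite on
  \<open>A\<close>, and because the coins of bias \<open>2 powr -t\<close> rarely succeed it is finite with probability at
  most \<open>1/2 + 2 powr -N\<close> under both measures.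

  For the e-process, \<open>E\<^sub>0 \<le> 1\<close> because \<open>F\<^sub>0\<close> is trivial. The path \<open>(0,1,1,\<dots>)\<close> lies in \<open>A\<close>, so
  \<open>E\<^sub>t > 1\<close> along it for some \<open>t \<ge> 1\<close>, hence on the whole cylinder \<open>C\<close> of its first \<open>t\<close>
  coordinates, which has positive probability \<open>p\<close> under the \<open>X\<^sub>1 = 0\<close> branch of \<open>P1\<close>. If
  \<open>sup E \<ge> c \<ge> 2\<close> on \<open>A\<close>, stopping on \<open>X\<^sub>1 = 1\<close> when \<open>E\<close> first exceeds \<open>c' = 2 - p/2\<close>, and on
  \<open>C\<close> at time \<open>t\<close>, gives a stopped value of \<open>P1\<close>-expectation at least \<open>c'/2 + p/2 > 1\<close>.
\<close>

lemma Fil_generators_subset: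
  "(\<Union>s\<in>{s. 1 \<le> s \<and> enat s \<le> T}. {{w \<in> Omega. w s \<in> B} | B. B \<subseteq> (UNIV :: bool set)})
     \<subseteq> Pow Omega"
  by auto

lemma space_Fil [simp]: "space (Fil T) = Omega"
  unfolding Fil_def by (rule space_measure_of[OF Fil_generators_subset])

lemma sets_Fil:
  "sets (Fil T) = sigma_sets Omega
     (\<Union>s\<in>{s. 1 \<le> s \<and> enat s \<le> T}. {{w \<in> Omega. w s \<in> B} | B. B \<subseteq> (UNIV :: bool set)})"
  unfolding Fil_def by (rule sets_measure_of[OF Fil_generators_subset])

lemma pred_Fil_coordinate: "1 \<le> s \<Longrightarrow> enat s \<le> T \<Longrightarrow> Measurable.pred (Fil T) (\<lambda>w. P (w s))"
  unfolding Measurable.pred_def sets_Fil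
  by (rule sigma_sets.Basic) (auto intro!: exI[of _ "Collect P"])

lemma filtration_Fil: "filtration Omega Fil"
  by unfold_locales (auto simp: sets_Fil intro!: sigma_sets_mono' intro: order_trans)

lemma cylinder_in_Fil:
  assumes "finite J" "\<And>s. s \<in> J \<Longrightarrow> 1 \<le> s \<and> enat s \<le> T"
  shows "{w\<in>Omega. \<forall>s\<in>J. w s = b s} \<in> sets (Fil T)"
proof -
  have "Measurable.pred (Fil T) (\<lambda>w. \<forall>s\<in>J. w s = b s)"
    using assms by (intro pred_intros_finite(3) pred_Fil_coordinate) auto
  then show ?thesis by (simp add: Measurable.pred_def)
qed

lemma Fil_set_determined:
  assumes "S \<in> sets (Fil (enat t))" "w \<in> S" "v \<in> Omega" "\<forall>s\<in>{1..t}. v s = w s"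
  shows "v \<in> S"
proof -
  have "\<forall>w v. w \<in> S \<longrightarrow> v \<in> Omega \<longrightarrow> (\<forall>s\<in>{1..t}. v s = w s) \<longrightarrow> v \<in> S"
    using assms(1) unfolding sets_Fil
  proof (induction rule: sigma_sets.induct)
    case (Compl a)
    then show ?case by (metis Diff_iff)
  next
    case (Union a)
    then show ?case by blast
  qed auto
  with assms show ?thesis by blast
qed

lemma Fil_measurable_determined:
  fixes f :: "(nat \<Rightarrow> bool) \<Rightarrow> 'b::t1_space"
  assumes "f \<in> borel_measurable (Fil (enat t))" "w \<in> Omega" "v \<in> Omega" "\<forall>s\<in>{1..t}. v s = w s"
  shows "f v = f w"
proof -
  have "f -` {f w} \<inter> Omega \<in> sets (Fil (enat t))"
    using measurable_sets[OF assms(1) borel_closed[OF closed_singleton]] by simp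
  from Fil_set_determined[OF this _ assms(3,4)] assms(2) show ?thesis by simp
qed

lemma space_Qprod [simp]: "space (Qprod f) = Omega"
  by (simp add: Qprod_def space_PiM Omega_def)

lemma prob_space_Qprod: "prob_space (Qprod f)"
  unfolding Qprod_def by (rule prob_space_PiM) (simp add: prob_space_measure_pmf)

lemma sets_Qprod_cong: "sets (Qprod f) = sets (Qprod g)"
  unfolding Qprod_def by (rule sets_PiM_cong) auto

lemma sets_Fil_subset_Qprod: "sets (Fil T) \<subseteq> sets (Qprod f)"
proof -
  have "{w\<in>Omega. w s \<in> B} \<in> sets (Qprod f)" if "1 \<le> s" for s B
  proof -
    have "(\<lambda>w. w s) \<in> measurable (Qprod f) (measure_pmf (bernoulli_pmf (f s)))"
      unfolding Qprod_def using that by (intro measurable_component_singleton) auto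
    from measurable_sets[OF this, of B] show ?thesis by (simp add: vimage_def Int_def conj_commute)
  qed
  then show ?thesis
    unfolding sets_Fil using sets.top[of "Qprod f"]
    by (intro sets.sigma_sets_subset'[where M="Qprod f", simplified]) auto
qed

lemma measure_Qprod_cylinder:
  assumes "finite J" "J \<subseteq> {1..}"
  shows "measure (Qprod f) {w\<in>Omega. \<forall>s\<in>J. w s = b s} = (\<Prod>s\<in>J. pmf (bernoulli_pmf (f s)) (b s))"
proof -
  have cylinder_eq: "{w\<in>Omega. \<forall>s\<in>J. w s = b s} =
      prod_emb {1..} (\<lambda>t. measure_pmf (bernoulli_pmf (f t))) J (PiE J (\<lambda>s. {b s}))"
    unfolding prod_emb_def Omega_def by (auto simp: PiE_iff extensional_def)
  show ?thesis
    unfolding cylinder_eq Qprod_def measure_def using assms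
    by (subst emeasure_PiM_emb)
       (auto simp: prob_space_measure_pmf emeasure_pmf_single prod_ennreal prod_nonneg)
qed

definition half_mixture :: "'a measure \<Rightarrow> 'a measure \<Rightarrow> 'a measure" where
  "half_mixture M1 M0 = bind (measure_pmf (bernoulli_pmf (1/2))) (\<lambda>x. if x then M1 else M0)"

context
  fixes M1 M0 :: "'a measure"
  assumes prob_M1: "prob_space M1" and prob_M0: "prob_space M0" and sets_M0: "sets M0 = sets M1"
begin

private lemma half_mixture_kernel_measurable:
  "(\<lambda>x. if x then M1 else M0) \<in> measurable (measure_pmf (bernoulli_pmf (1/2))) (subprob_algebra M1)"
  using prob_M1 prob_M0 sets_M0 by (auto simp: space_subprob_algebra prob_space_imp_subprob_space)

lemma sets_half_mixture: "sets (half_mixture M1 M0) = sets M1"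
  unfolding half_mixture_def using sets_M0 by (intro sets_bind) auto

lemma emeasure_half_mixture:
  assumes "S \<in> sets M1"
  shows "emeasure (half_mixture M1 M0) S = ennreal ((measure M1 S + measure M0 S) / 2)"
proof -
  have "emeasure (half_mixture M1 M0) S = emeasure M1 S * ennreal (1/2) + emeasure M0 S * ennreal (1/2)"
    unfolding half_mixture_def using assms
    by (simp add: emeasure_bind[OF _ half_mixture_kernel_measurable])
  also have "\<dots> = ennreal ((measure M1 S + measure M0 S) / 2)"
    using prob_M1 prob_M0
    by (simp add: finite_measure.emeasure_eq_measure[OF prob_space.finite_measure]
        add_divide_distrib ennreal_divide_numeral[symmetric] divide_ennreal_def)
  finally show ?thesis .
qed

lemma measure_half_mixture:
  "S \<in> sets M1 \<Longrightarrow> measure (half_mixture M1 M0) S = (measure M1 S + measure M0 S) / 2"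
  by (simp add: measure_def[of "half_mixture M1 M0"] emeasure_half_mixture)

lemma prob_space_half_mixture: "prob_space (half_mixture M1 M0)"
proof
  have "space (half_mixture M1 M0) = space M1"
    using sets_half_mixture by (rule sets_eq_imp_space_eq)
  then show "emeasure (half_mixture M1 M0) (space (half_mixture M1 M0)) = 1"
    using prob_space.prob_space[OF prob_M1]
      prob_space.prob_space[OF prob_M0, unfolded sets_eq_imp_space_eq[OF sets_M0]]
    by (simp add: emeasure_half_mixture)
qed

end

definition fair_tail :: "real \<Rightarrow> (nat \<Rightarrow> bool) measure" where
  "fair_tail b = Qprod (\<lambda>t. if t = 1 then b else 1/2)"

definition thin_tail :: "real \<Rightarrow> (nat \<Rightarrow> bool) measure" where
  "thin_tail b = Qprod (\<lambda>t. if t = 1 then b else 2 powr (- real t))"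

lemma P1_half_mixture: "P1 = half_mixture (fair_tail 1) (thin_tail 0)"
  unfolding P1_def half_mixture_def fair_tail_def thin_tail_def ..

lemma P2_half_mixture: "P2 = half_mixture (thin_tail 1) (fair_tail 0)"
  unfolding P2_def half_mixture_def fair_tail_def thin_tail_def ..

lemma Pfam_cases:
  assumes "P \<in> Pfam"
  obtains f g where "P = half_mixture (Qprod f) (Qprod g)"
  using assms unfolding Pfam_def P1_half_mixture P2_half_mixture fair_tail_def thin_tail_def
  by blast

lemma prob_space_Pfam: "P \<in> Pfam \<Longrightarrow> prob_space P"
  by (elim Pfam_cases) (metis prob_space_half_mixture prob_space_Qprod sets_Qprod_cong)

lemma sets_Pfam: "P \<in> Pfam \<Longrightarrow> sets P = sets (Qprod h)"
  by (elim Pfam_cases) (metis sets_half_mixture prob_space_Qprod sets_Qprod_cong)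

lemma space_Pfam: "P \<in> Pfam \<Longrightarrow> space P = Omega"
  using sets_eq_imp_space_eq[OF sets_Pfam] by simp

lemma measure_half_mixture_Qprod:
  "S \<in> sets (Fil T) \<Longrightarrow>
    measure (half_mixture (Qprod f) (Qprod g)) S = (measure (Qprod f) S + measure (Qprod g) S) / 2"
  using sets_Fil_subset_Qprod by (intro measure_half_mixture prob_space_Qprod sets_Qprod_cong) auto

lemma measure_P1:
  "S \<in> sets (Fil T) \<Longrightarrow> measure P1 S = (measure (fair_tail 1) S + measure (thin_tail 0) S) / 2"
  unfolding P1_half_mixture fair_tail_def thin_tail_def by (rule measure_half_mixture_Qprod)

lemma measure_P2:
  "S \<in> sets (Fil T) \<Longrightarrow> measure P2 S = (measure (thin_tail 1) S + measure (fair_tail 0) S) / 2"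
  unfolding P2_half_mixture fair_tail_def thin_tail_def by (rule measure_half_mixture_Qprod)

definition hits_after :: "nat \<Rightarrow> (nat \<Rightarrow> bool) set" where
  "hits_after N = {w\<in>Omega. \<exists>t\<ge>N. w t}"

lemma hits_after_in_Fil:
  assumes "1 \<le> N"
  shows "hits_after N \<in> sets (Fil \<infinity>)"
proof -
  have coordinate: "Measurable.pred (Fil \<infinity>) (\<lambda>w. w t)" if "1 \<le> t" for t
    using pred_Fil_coordinate[of t \<infinity> "\<lambda>b. b"] that by simp
  have "Measurable.pred (Fil \<infinity>) (\<lambda>w. \<exists>t. N \<le> t \<and> w t)"
    by (intro pred_intros_countable pred_intros_conj1' coordinate) (use assms in auto)
  then show ?thesis unfolding hits_after_def Measurable.pred_def space_Fil .
qed

lemma A_inf_eq_INT_hits_after: "A_inf = (\<Inter>N. hits_after (Suc N))"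
proof -
  have "infinite {t. 1 \<le> t \<and> w t} \<longleftrightarrow> (\<forall>N. \<exists>t\<ge>Suc N. w t)" for w
  proof
    assume "infinite {t. 1 \<le> t \<and> w t}"
    then show "\<forall>N. \<exists>t\<ge>Suc N. w t"
      unfolding infinite_nat_iff_unbounded_le by blast
  next
    assume hits: "\<forall>N. \<exists>t\<ge>Suc N. w t"
    show "infinite {t. 1 \<le> t \<and> w t}"
      unfolding infinite_nat_iff_unbounded_le
    proof
      fix m
      from hits obtain t where "Suc m \<le> t" "w t" by blast
      then show "\<exists>t\<ge>m. t \<in> {t. 1 \<le> t \<and> w t}" by (intro exI[of _ t]) auto
    qed
  qed
  then show ?thesis unfolding A_inf_def hits_after_def by auto
qed

lemma A_inf_in_Fil: "A_inf \<in> sets (Fil \<infinity>)"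
  unfolding A_inf_eq_INT_hits_after using hits_after_in_Fil by (intro sets.countable_INT) auto

lemma first_one_A_inf_in_Fil: "{w\<in>A_inf. w 1} \<in> sets (Fil \<infinity>)"
proof -
  have "{w\<in>A_inf. w 1} = A_inf \<inter> {w\<in>Omega. \<forall>s\<in>{1}. w s = True}" by (auto simp: A_inf_def)
  also have "\<dots> \<in> sets (Fil \<infinity>)" using A_inf_in_Fil by (intro sets.Int cylinder_in_Fil) auto
  finally show ?thesis .
qed

lemma two_powr_minus_real: "2 powr (- real n) = (1/2::real) ^ n"
  by (simp add: powr_minus powr_realpow power_one_over inverse_eq_divide)

lemma measure_Qprod_hits_after_fair:
  assumes fair: "\<forall>t\<ge>2. f t = 1/2" and N: "1 \<le> N"
  shows "measure (Qprod f) (hits_after N) = 1"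
proof -
  interpret prob_space "Qprod f" by (rule prob_space_Qprod)
  have hits_events: "hits_after N \<in> events"
    using hits_after_in_Fil[OF N] sets_Fil_subset_Qprod by blast
  have misses: "prob (Omega - hits_after N) \<le> (1/2) ^ k" for k
  proof -
    let ?window = "{w\<in>Omega. \<forall>s\<in>{Suc N..N + k}. w s = False}"
    have "?window \<in> sets (Fil \<infinity>)" by (intro cylinder_in_Fil) auto
    then have "?window \<in> events" using sets_Fil_subset_Qprod by blast
    moreover have "Omega - hits_after N \<subseteq> ?window"
    proof
      fix w assume w: "w \<in> Omega - hits_after N"
      have "\<not> w s" if "Suc N \<le> s" for s
        using w that Suc_leD unfolding hits_after_def by blast
      with w show "w \<in> ?window" by simp
    qed
    ultimately have "prob (Omega - hits_after N) \<le> prob ?window"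
      by (intro finite_measure_mono)
    also have "\<dots> = (\<Prod>s\<in>{Suc N..N + k}. pmf (bernoulli_pmf (f s)) False)"
      using N by (subst measure_Qprod_cylinder) auto
    also have "\<dots> = (\<Prod>s\<in>{Suc N..N + k}. 1/2)"
      using N by (intro prod.cong) (auto simp: fair[rule_format])
    finally show ?thesis by simp
  qed
  have "(\<lambda>k. (1/2::real) ^ k) \<longlonglongrightarrow> 0"
    by (rule LIMSEQ_power_zero) simp
  then have "prob (Omega - hits_after N) \<le> 0"
    by (rule LIMSEQ_le_const) (use misses in blast)
  moreover have "prob (Omega - hits_after N) = 1 - prob (hits_after N)"
    using prob_compl[OF hits_events] by simp
  ultimately show ?thesis
    using measure_nonneg[of "Qprod f" "Omega - hits_after N"] by linarith
qed

lemma measure_Qprod_A_inf_fair: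
  assumes "\<forall>t\<ge>2. f t = 1/2"
  shows "measure (Qprod f) A_inf = 1"
proof -
  interpret prob_space "Qprod f" by (rule prob_space_Qprod)
  have "AE w in Qprod f. w \<in> hits_after (Suc N)" for N
  proof -
    have "hits_after (Suc N) \<in> sets (Fil \<infinity>)" by (rule hits_after_in_Fil) simp
    then have "hits_after (Suc N) \<in> events" using sets_Fil_subset_Qprod by blast
    moreover have "prob (hits_after (Suc N)) = 1"
      by (rule measure_Qprod_hits_after_fair[OF assms]) simp
    ultimately show ?thesis by (subst prob_eq_1[symmetric])
  qed
  then have "AE w in Qprod f. \<forall>N. w \<in> hits_after (Suc N)"
    by (subst AE_all_countable) blast
  then have "AE w in Qprod f. w \<in> A_inf"
    unfolding A_inf_eq_INT_hits_after by (rule eventually_mono) blast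
  moreover have "A_inf \<in> events"
    using A_inf_in_Fil sets_Fil_subset_Qprod by blast
  ultimately show ?thesis
    by (subst prob_eq_1)
qed

lemma measure_Qprod_hits_after_thin:
  assumes thin: "\<forall>t\<ge>2. f t = 2 powr (- real t)" and N: "2 \<le> N"
  shows "measure (Qprod f) (hits_after N) \<le> 2 * (1/2) ^ N"
proof -
  interpret prob_space "Qprod f" by (rule prob_space_Qprod)
  define D where "D i = {w\<in>Omega. \<forall>s\<in>{N + i}. w s = True}" for i
  have D_events: "D i \<in> events" for i
  proof -
    have "D i \<in> sets (Fil \<infinity>)" unfolding D_def using N by (intro cylinder_in_Fil) auto
    then show ?thesis using sets_Fil_subset_Qprod by blast
  qed
  have prob_D: "prob (D i) = (1/2) ^ N * (1/2) ^ i" for i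
  proof -
    have "prob (D i) = 2 powr (- real (N + i))"
      using thin N two_powr_minus_real[of "N + i"] unfolding D_def
      by (subst measure_Qprod_cylinder) (auto simp: power_le_one)
    also have "\<dots> = (1/2) ^ (N + i)" by (rule two_powr_minus_real)
    finally show ?thesis by (simp add: power_add)
  qed
  have hits_eq: "hits_after N = (\<Union>i. D i)"
  proof (intro set_eqI iffI)
    fix w assume "w \<in> hits_after N"
    then obtain t where "w \<in> Omega" "N \<le> t" "w t" by (auto simp: hits_after_def)
    then have "w \<in> D (t - N)" by (simp add: D_def)
    then show "w \<in> (\<Union>i. D i)" by blast
  next
    fix w assume "w \<in> (\<Union>i. D i)"
    then obtain i where "w \<in> Omega" "w (N + i)" by (auto simp: D_def)
    then show "w \<in> hits_after N" unfolding hits_after_def using le_add1 by blast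
  qed
  have summable_D: "summable (\<lambda>i. prob (D i))"
    unfolding prob_D by (intro summable_mult summable_geometric) simp
  have "prob (hits_after N) \<le> (\<Sum>i. prob (D i))"
    unfolding hits_eq
    by (rule finite_measure_subadditive_countably) (use D_events summable_D in blast)+
  also have "\<dots> = (1/2) ^ N * (\<Sum>i. (1/2::real) ^ i)"
    unfolding prob_D by (intro suminf_mult summable_geometric) simp
  also have "\<dots> = 2 * (1/2) ^ N"
    by (simp add: suminf_geometric)
  finally show ?thesis .
qed

definition hitting_time :: "(nat \<Rightarrow> 'a \<Rightarrow> bool) \<Rightarrow> 'a \<Rightarrow> enat" where
  "hitting_time P w = Inf {enat n | n. P n w}"

lemma hitting_time_finite_iff: "hitting_time P w < \<infinity> \<longleftrightarrow> (\<exists>n. P n w)"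
proof
  assume finite: "hitting_time P w < \<infinity>"
  show "\<exists>n. P n w"
  proof (rule ccontr)
    assume "\<nexists>n. P n w"
    then have "{enat n | n. P n w} = {}" by blast
    then have "hitting_time P w = \<infinity>"
      unfolding hitting_time_def top_enat_def[symmetric] by (simp only: Inf_empty)
    with finite show False by simp
  qed
next
  assume "\<exists>n. P n w"
  then obtain n where "P n w" ..
  then have "hitting_time P w \<le> enat n"
    unfolding hitting_time_def by (intro Inf_lower) blast
  then show "hitting_time P w < \<infinity>"
    using enat_ord_simps(4) le_less_trans by blast
qed

lemma hitting_time_attained:
  assumes "P n w"
  obtains m where "P m w" "hitting_time P w = enat m"
proof -
  have "hitting_time P w \<in> {enat n | n. P n w}"
    unfolding hitting_time_def using assms by (intro wellorder_InfI) blast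
  then show ?thesis using that by blast
qed

lemma stopping_time_hitting_time:
  assumes "\<And>n. Measurable.pred (Fil (enat n)) (P n)"
  shows "stopping_time Fil (hitting_time P)"
  unfolding hitting_time_def[abs_def]
proof (rule stopping_time_Inf_enat[OF filtration_Fil])
  fix i :: enat
  show "Measurable.pred (Fil i) (\<lambda>w. \<exists>n. i = enat n \<and> P n w)"
  proof (cases i)
    case (enat m)
    then show ?thesis using assms[of m] by simp
  next
    case infinity
    then show ?thesis by simp
  qed
qed

lemma stopping_time_finite_set_in_Fil:
  "stopping_time Fil \<tau> \<Longrightarrow> {w\<in>Omega. \<tau> w < \<infinity>} \<in> sets (Fil \<infinity>)"
  using filtration.stopping_time_less_const[OF filtration_Fil, of \<tau> \<infinity>]
  unfolding Measurable.pred_def space_Fil .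

lemma SUP_Pfam: "(SUP P\<in>Pfam. f P) = max (f P1) (f P2 :: real)"
  unfolding Pfam_def by (subst cSup_eq_Max) auto

lemma measure_fair_tail_1_first_one_A_inf: "measure (fair_tail 1) {w\<in>A_inf. w 1} = 1"
proof -
  interpret prob_space "fair_tail 1" unfolding fair_tail_def by (rule prob_space_Qprod)
  let ?first = "{w\<in>Omega. \<forall>s\<in>{1}. w s = True}"
  have "?first \<in> sets (Fil \<infinity>)" by (rule cylinder_in_Fil) auto
  then have first_events: "?first \<in> events"
    using sets_Fil_subset_Qprod unfolding fair_tail_def by blast
  have A_inf_events: "A_inf \<in> events"
    using A_inf_in_Fil sets_Fil_subset_Qprod unfolding fair_tail_def by blast
  have "prob ?first = 1"
    unfolding fair_tail_def by (subst measure_Qprod_cylinder) simp_all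
  then have "AE w in fair_tail 1. w \<in> ?first"
    by (subst prob_eq_1[OF first_events, symmetric])
  moreover have "AE w in fair_tail 1. w \<in> A_inf"
    using measure_Qprod_A_inf_fair[of "\<lambda>t. if t = 1 then 1 else 1/2"]
    by (subst prob_eq_1[OF A_inf_events, symmetric]) (simp add: fair_tail_def)
  ultimately have "AE w in fair_tail 1. w \<in> {w\<in>A_inf. w 1}"
    by eventually_elim simp
  moreover have "{w\<in>A_inf. w 1} \<in> events"
    using first_one_A_inf_in_Fil sets_Fil_subset_Qprod unfolding fair_tail_def by blast
  ultimately show ?thesis by (subst prob_eq_1)
qed

lemma measure_P1_first_one_A_inf: "1/2 \<le> measure P1 {w\<in>A_inf. w 1}"
proof -
  let ?B = "{w\<in>A_inf. w 1}"
  have "measure P1 ?B = (measure (fair_tail 1) ?B + measure (thin_tail 0) ?B) / 2"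
    using first_one_A_inf_in_Fil by (rule measure_P1)
  moreover have "measure (fair_tail 1) ?B = 1" by (rule measure_fair_tail_1_first_one_A_inf)
  moreover have "0 \<le> measure (thin_tail 0) ?B" by (rule measure_nonneg)
  ultimately show ?thesis by (simp only:) simp
qed

lemma measure_Pfam_hits_after:
  assumes "P \<in> Pfam" "2 \<le> N"
  shows "measure P (hits_after N) \<le> 1/2 + (1/2) ^ N"
proof -
  have H: "hits_after N \<in> sets (Fil \<infinity>)" using assms(2) by (intro hits_after_in_Fil) simp
  have fair: "measure (fair_tail b) (hits_after N) \<le> 1" for b
    unfolding fair_tail_def by (rule prob_space.prob_le_1[OF prob_space_Qprod])
  have thin: "measure (thin_tail b) (hits_after N) \<le> 2 * (1/2) ^ N" for b
    unfolding thin_tail_def using assms(2) by (intro measure_Qprod_hits_after_thin) simp_all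
  have mixture: "(measure (fair_tail b) (hits_after N) + measure (thin_tail b') (hits_after N)) / 2
      \<le> 1/2 + (1/2) ^ N" for b b'
  proof -
    have "(measure (fair_tail b) (hits_after N) + measure (thin_tail b') (hits_after N)) / 2
        \<le> (1 + 2 * (1/2) ^ N) / 2"
      using fair thin by (intro divide_right_mono add_mono) simp_all
    also have "\<dots> = 1/2 + (1/2) ^ N" by (simp add: add_divide_distrib)
    finally show ?thesis .
  qed
  from assms(1) consider "P = P1" | "P = P2" unfolding Pfam_def by blast
  then show ?thesis
  proof cases
    case 1
    show ?thesis unfolding 1 measure_P1[OF H] by (rule mixture)
  next
    case 2
    show ?thesis unfolding 2 measure_P2[OF H] add.commute[of "measure (thin_tail 1) _"]
      by (rule mixture)
  qed
qed

definition first_hit_after :: "nat \<Rightarrow> (nat \<Rightarrow> bool) \<Rightarrow> enat" where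
  "first_hit_after N = hitting_time (\<lambda>t w. N \<le> t \<and> w t)"

lemma stopping_time_first_hit_after:
  assumes "1 \<le> N"
  shows "stopping_time Fil (first_hit_after N)"
proof -
  have coordinate: "Measurable.pred (Fil (enat t)) (\<lambda>w. w t)" if "1 \<le> t" for t
    using pred_Fil_coordinate[of t "enat t" "\<lambda>b. b"] that by simp
  show ?thesis
    unfolding first_hit_after_def
    by (intro stopping_time_hitting_time pred_intros_conj1' coordinate) (use assms in simp)
qed

lemma first_hit_after_finite: "{w\<in>Omega. first_hit_after N w < \<infinity>} = hits_after N"
  unfolding first_hit_after_def hitting_time_finite_iff hits_after_def ..

lemma A_inf_subset_hits_after:
  assumes "1 \<le> N"
  shows "A_inf \<subseteq> hits_after N"
proof -
  have "A_inf \<subseteq> hits_after (Suc (N - 1))"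
    unfolding A_inf_eq_INT_hits_after by (rule INT_lower) simp
  with assms show ?thesis by simp
qed

lemma measure_P1_finite_stopping_time_lower:
  assumes "stopping_time Fil \<tau>" "A_inf \<subseteq> {w\<in>Omega. \<tau> w < \<infinity>}"
  shows "1/2 \<le> measure P1 {w\<in>Omega. \<tau> w < \<infinity>}"
proof -
  interpret prob_space P1 by (rule prob_space_Pfam) (simp add: Pfam_def)
  have "{w\<in>Omega. \<tau> w < \<infinity>} \<in> events"
    using stopping_time_finite_set_in_Fil[OF assms(1)] sets_Fil_subset_Qprod sets_Pfam[of P1]
    unfolding Pfam_def by blast
  then have "measure P1 {w\<in>A_inf. w 1} \<le> measure P1 {w\<in>Omega. \<tau> w < \<infinity>}"
    using assms(2) by (intro finite_measure_mono) auto
  with measure_P1_first_one_A_inf show ?thesis by linarith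
qed

lemma mu_star_A_inf: "mu_star A_inf = 1/2"
proof -
  define T where "T = {\<tau>. stopping_time Fil \<tau> \<and> A_inf \<subseteq> {w\<in>Omega. \<tau> w < \<infinity>}}"
  define g :: "((nat \<Rightarrow> bool) \<Rightarrow> enat) \<Rightarrow> real"
    where "g = (\<lambda>\<tau>. SUP P\<in>Pfam. measure P {w\<in>Omega. \<tau> w < \<infinity>})"
  have mu_star_eq: "mu_star A_inf = (INF \<tau>\<in>T. g \<tau>)"
    unfolding mu_star_def T_def g_def ..
  have lower: "1/2 \<le> g \<tau>" if "\<tau> \<in> T" for \<tau>
  proof -
    from that have "stopping_time Fil \<tau>" "A_inf \<subseteq> {w\<in>Omega. \<tau> w < \<infinity>}"
      unfolding T_def by auto
    then have "1/2 \<le> measure P1 {w\<in>Omega. \<tau> w < \<infinity>}"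
      by (rule measure_P1_finite_stopping_time_lower)
    then show ?thesis unfolding g_def SUP_Pfam by (rule max.coboundedI1)
  qed
  have first_hit: "first_hit_after N \<in> T" "g (first_hit_after N) \<le> 1/2 + (1/2) ^ N"
    if "2 \<le> N" for N
  proof -
    show "first_hit_after N \<in> T"
      using that stopping_time_first_hit_after A_inf_subset_hits_after
      unfolding T_def mem_Collect_eq first_hit_after_finite by simp
    show "g (first_hit_after N) \<le> 1/2 + (1/2) ^ N"
      unfolding g_def first_hit_after_finite SUP_Pfam
      using measure_Pfam_hits_after[of P1 N] measure_Pfam_hits_after[of P2 N] that
      by (simp add: Pfam_def)
  qed
  have bdd: "bdd_below (g ` T)" using lower by (intro bdd_belowI2)
  have "1/2 \<le> (INF \<tau>\<in>T. g \<tau>)"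
  proof (rule cINF_greatest)
    show "T \<noteq> {}" using first_hit(1)[of 2] by blast
  qed (rule lower)
  moreover have "(INF \<tau>\<in>T. g \<tau>) \<le> 1/2"
  proof (rule LIMSEQ_le_const)
    have "(\<lambda>N. 1/2 + (1/2::real) ^ N) \<longlonglongrightarrow> 1/2 + 0"
      by (intro tendsto_add tendsto_const LIMSEQ_power_zero) simp
    then show "(\<lambda>N. 1/2 + (1/2::real) ^ N) \<longlonglongrightarrow> 1/2" by simp
    have "(INF \<tau>\<in>T. g \<tau>) \<le> 1/2 + (1/2) ^ N" if "2 \<le> N" for N
      using first_hit[OF that] by (rule cINF_lower2[OF bdd])
    then show "\<exists>M. \<forall>N\<ge>M. (INF \<tau>\<in>T. g \<tau>) \<le> 1/2 + (1/2) ^ N" by blast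
  qed
  ultimately show ?thesis unfolding mu_star_eq by linarith
qed

lemma e_process_initial_le_1:
  assumes E: "e_process E" and w: "w \<in> Omega"
  shows "E 0 w \<le> 1"
proof -
  have P1: "P1 \<in> Pfam" by (simp add: Pfam_def)
  have E0: "E 0 \<in> borel_measurable (Fil (enat 0))" using E by (simp add: e_process_def)
  have const: "E 0 v = E 0 w" if "v \<in> Omega" for v
    using Fil_measurable_determined[OF E0 w that] by simp
  have "(\<integral>\<^sup>+v. stopped E (\<lambda>_. enat 0) v \<partial>P1) \<le> 1"
    using E P1 stopping_time_const unfolding e_process_def by blast
  moreover have "(\<integral>\<^sup>+v. stopped E (\<lambda>_. enat 0) v \<partial>P1) = (\<integral>\<^sup>+v. E 0 w \<partial>P1)"
    using const space_Pfam[OF P1] by (intro nn_integral_cong) (simp add: stopped_def)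
  moreover have "(\<integral>\<^sup>+v. E 0 w \<partial>P1) = E 0 w"
    using prob_space.emeasure_space_1[OF prob_space_Pfam[OF P1]] by simp
  ultimately show ?thesis by simp
qed

definition exceedance_time ::
    "real \<Rightarrow> (nat \<Rightarrow> 'a \<Rightarrow> ennreal) \<Rightarrow> 'a set \<Rightarrow> nat \<Rightarrow> 'a \<Rightarrow> enat" where
  "exceedance_time c E C t = hitting_time (\<lambda>n w. ennreal c < E n w \<or> (w \<in> C \<and> n = t))"

lemma stopping_time_exceedance_time:
  assumes E: "e_process E" and C: "C \<in> sets (Fil (enat t))"
  shows "stopping_time Fil (exceedance_time c E C t)"
  unfolding exceedance_time_def
proof (rule stopping_time_hitting_time)
  fix n
  have "E n \<in> borel_measurable (Fil (enat n))" using E by (simp add: e_process_def)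
  then have exceeds: "Measurable.pred (Fil (enat n)) (\<lambda>w. ennreal c < E n w)" by measurable
  have "Measurable.pred (Fil (enat n)) (\<lambda>w. w \<in> C \<and> n = t)"
  proof (intro pred_intros_conj2')
    assume "n = t"
    have "{w \<in> Omega. w \<in> C} = C" using sets.sets_into_space[OF C] by auto
    with C \<open>n = t\<close> show "Measurable.pred (Fil (enat n)) (\<lambda>w. w \<in> C)"
      unfolding Measurable.pred_def space_Fil by (simp only:)
  qed
  with exceeds show "Measurable.pred (Fil (enat n)) (\<lambda>w. ennreal c < E n w \<or> (w \<in> C \<and> n = t))"
    by (rule pred_intros_logic(5))
qed

lemma stopped_exceedance_time_lower:
  assumes c: "1 \<le> c" and disjoint: "B \<inter> C = {}"
    and B_exceeds: "\<And>w. w \<in> B \<Longrightarrow> \<exists>n. ennreal c < E n w"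
    and C_exceeds: "\<And>w. w \<in> C \<Longrightarrow> 1 \<le> E t w"
  shows "ennreal c * indicator B w + indicator C w \<le> stopped E (exceedance_time c E C t) w"
proof -
  define stop where "stop n w \<longleftrightarrow> ennreal c < E n w \<or> (w \<in> C \<and> n = t)" for n w
  have stopped_eq: "stopped E (exceedance_time c E C t) w = E m w" if "hitting_time stop w = enat m" for m
    using that unfolding exceedance_time_def stop_def[abs_def] by (simp add: stopped_def)
  show ?thesis
  proof (cases "w \<in> B")
    case True
    then have "w \<notin> C" using disjoint by blast
    from B_exceeds[OF True] obtain n where "stop n w" unfolding stop_def by blast
    then obtain m where m: "stop m w" "hitting_time stop w = enat m"
      by (rule hitting_time_attained[of stop n w])
    from m(1) \<open>w \<notin> C\<close> have "ennreal c < E m w" unfolding stop_def by blast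
    then have "ennreal c \<le> E m w" by (rule less_imp_le)
    with True \<open>w \<notin> C\<close> stopped_eq[OF m(2)] show ?thesis by simp
  next
    case False
    show ?thesis
    proof (cases "w \<in> C")
      case True
      then have "stop t w" unfolding stop_def by blast
      then obtain m where m: "stop m w" "hitting_time stop w = enat m"
        by (rule hitting_time_attained[of stop t w])
      from m(1) have "1 \<le> E m w" unfolding stop_def
      proof
        assume exceeds: "ennreal c < E m w"
        have "1 \<le> ennreal c" using c by simp
        from order_trans[OF this less_imp_le[OF exceeds]] show ?thesis .
      next
        assume "w \<in> C \<and> m = t"
        then show ?thesis using C_exceeds by simp
      qed
      with False True stopped_eq[OF m(2)] show ?thesis by simp
    next
      case False
      with \<open>w \<notin> B\<close> show ?thesis by simp
    qed
  qed
qed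

lemma e_process_stopping_bound:
  assumes E: "e_process E" and P: "P \<in> Pfam" and c: "1 \<le> c"
    and B: "B \<in> sets P" and B_exceeds: "\<And>w. w \<in> B \<Longrightarrow> \<exists>n. ennreal c < E n w"
    and C: "C \<in> sets (Fil (enat t))" and C_exceeds: "\<And>w. w \<in> C \<Longrightarrow> 1 \<le> E t w"
    and disjoint: "B \<inter> C = {}"
  shows "c * measure P B + measure P C \<le> 1"
proof -
  interpret prob_space P using P by (rule prob_space_Pfam)
  have "C \<in> events" using C sets_Fil_subset_Qprod sets_Pfam[OF P] by blast
  with B c have "ennreal (c * measure P B + measure P C)
      = (\<integral>\<^sup>+w. ennreal c * indicator B w + indicator C w \<partial>P)"
    by (subst nn_integral_add)
       (auto simp: nn_integral_cmult_indicator emeasure_eq_measure ennreal_mult)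
  also have "\<dots> \<le> (\<integral>\<^sup>+w. stopped E (exceedance_time c E C t) w \<partial>P)"
    using stopped_exceedance_time_lower[OF c disjoint B_exceeds C_exceeds] by (rule nn_integral_mono)
  also have "\<dots> \<le> 1"
    using E P stopping_time_exceedance_time[OF E C] unfolding e_process_def by blast
  finally show ?thesis by (simp only: ennreal_le_1)
qed

lemma A_inf_first_zero: "\<exists>w\<in>A_inf. \<not> w 1"
proof
  let ?w = "restrict (\<lambda>s. 2 \<le> s) {1..} :: nat \<Rightarrow> bool"
  have "?w \<in> Omega" by (simp add: Omega_def restrict_PiE_iff)
  moreover have "{t. 1 \<le> t \<and> ?w t} = {2..}" by auto
  ultimately show "?w \<in> A_inf" by (simp add: A_inf_def infinite_Ici)
  show "\<not> ?w 1" by simp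
qed

lemma measure_thin_tail_0_cylinder_pos:
  assumes "\<not> w 1"
  shows "0 < measure (thin_tail 0) {v\<in>Omega. \<forall>s\<in>{1..t}. v s = w s}"
proof -
  have "0 < pmf (bernoulli_pmf (if s = 1 then 0 else 2 powr - real s)) (w s)" if "1 \<le> s" for s
  proof (cases "s = 1")
    case True
    with assms show ?thesis by simp
  next
    case False
    with that have "0 < (1/2::real) ^ s" "(1/2::real) ^ s < 1" by (simp_all add: power_less_one_iff)
    with False show ?thesis unfolding two_powr_minus_real by (cases "w s") simp_all
  qed
  then show ?thesis
    unfolding thin_tail_def by (subst measure_Qprod_cylinder) (auto intro: prod_pos)
qed

lemma e_process_SUP_on_A_inf_less_2:
  assumes E: "e_process E" and sup: "\<forall>w\<in>A_inf. ennreal c \<le> (SUP t. E t w)"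
  shows "c < 2"
proof (rule ccontr)
  assume "\<not> c < 2"
  then have c: "2 \<le> c" by simp
  obtain w0 where w0: "w0 \<in> A_inf" "\<not> w0 1" using A_inf_first_zero by blast
  then have w0_Omega: "w0 \<in> Omega" by (simp add: A_inf_def)
  have "ennreal 1 < ennreal c" using c by (simp add: ennreal_less_iff)
  also have "\<dots> \<le> (SUP t. E t w0)" using sup w0 by blast
  finally obtain t where t: "1 < E t w0" by (auto simp: less_SUP_iff)
  have "t \<noteq> 0" using e_process_initial_le_1[OF E w0_Omega] t by (metis leD)
  define C where "C = {v\<in>Omega. \<forall>s\<in>{1..t}. v s = w0 s}"
  have C_Fil: "C \<in> sets (Fil (enat t))" unfolding C_def by (rule cylinder_in_Fil) auto
  have C_exceeds: "1 \<le> E t v" if "v \<in> C" for v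
  proof -
    have "E t \<in> borel_measurable (Fil (enat t))" using E by (simp add: e_process_def)
    then have "E t v = E t w0" using w0_Omega that unfolding C_def by (intro Fil_measurable_determined) auto
    with t show ?thesis by simp
  qed
  let ?B = "{w\<in>A_inf. w 1}"
  have disjoint: "?B \<inter> C = {}" using \<open>t \<noteq> 0\<close> w0(2) unfolding C_def by auto
  define p where "p = measure (thin_tail 0) C"
  have "0 < p" unfolding p_def C_def by (rule measure_thin_tail_0_cylinder_pos[of w0, OF w0(2)])
  moreover have "p \<le> 1" unfolding p_def thin_tail_def by (rule prob_space.prob_le_1[OF prob_space_Qprod])
  moreover define c' where "c' = 2 - p/2"
  ultimately have c': "1 \<le> c'" "c' < c" using c by simp_all
  have B_exceeds: "\<exists>n. ennreal c' < E n w" if "w \<in> ?B" for w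
  proof -
    have "ennreal c' < ennreal c" using c' by (simp add: ennreal_less_iff)
    also have "\<dots> \<le> (SUP t. E t w)" using sup that by blast
    finally show ?thesis by (simp add: less_SUP_iff)
  qed
  have "?B \<in> sets P1"
    using first_one_A_inf_in_Fil sets_Fil_subset_Qprod sets_Pfam[of P1] unfolding Pfam_def by blast
  then have "c' * measure P1 ?B + measure P1 C \<le> 1"
    using E c'(1) B_exceeds C_Fil C_exceeds disjoint
    by (intro e_process_stopping_bound) (auto simp: Pfam_def)
  moreover have "c' * (1/2) \<le> c' * measure P1 ?B"
    using measure_P1_first_one_A_inf c'(1) by (intro mult_left_mono) simp_all
  moreover have "p / 2 \<le> measure P1 C"
    unfolding p_def measure_P1[OF C_Fil] using measure_nonneg[of "fair_tail 1" C] by simp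
  ultimately show False using \<open>0 < p\<close> c'_def by linarith
qed

theorem mainTheorem10:
  shows "mu_star A_inf = 1/2 \<and>
    (\<forall>E (c::real). e_process E \<and> 1 \<le> c \<and> (\<forall>w \<in> A_inf. ennreal c \<le> (SUP t. E t w))
        \<longrightarrow> c < 2)"
  using mu_star_A_inf e_process_SUP_on_A_inf_less_2 by blast

end
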